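(* Let $T\colon[0,1]\to[0,1]$ be a Borel measurable map, let $\eta$ be a $T$-invariant ergodic Borel probability measure on $[0,1]$, and let $f\in L^1([0,1],\eta)$ be real-valued, non-negative and bounded. For $y\in[0,1]$ let $\mu_y$ be the $f$-weighted return time measure with respect to $T$ and with reference point $y$. Then for $\eta$-almost every $y\in[0,1]$ the autocorrelation $\gamma_{\mu_y}$ exists and $$\gamma_{\mu_y}=\sum_{z\in\mathbb{Z}}\Xi(T,\eta)(z)\,\delta_z .$$
   Context: $T$ is called invertible if it is a bijection with Borel measurable inverse; then $T^z$ is defined for all $z\in\mathbb{Z}$. For $z\in\mathbb{Z}$, $\delta_z$ denotes the Dirac point mass at $z$. The $f$-weighted return time measure with respect to $T$ and with reference point $y$ is the measure on $\mathbb{Z}$ $$\mu_y=\sum_{n\in\mathbb{N}_0} f(T^n(y))\,\delta_n \ \text{ if $T$ is non-invertible},\qquad \mu_y=\sum_{z\in\mathbb{Z}} f(T^z(y))\,\delta_z\ \text{ if $T$ is invertible}.$$ For a measure $\mu$ on $\mathbb{Z}$, $\widetilde{\mu}$ is the measure with $\widetilde{\mu}(A)=\overline{\mu(-A)}$, $\mu|_n$ is the restriction of $\mu$ to $B_n=\{x\in\mathbb{Z}:|x|\le n\}$, and $*$ is convolution of measures, $(\mu*\nu)(A)=\iint \mathbf{1}_A(x+y)\,d\mu(x)\,d\nu(y)$. The autocorrelation $\gamma_\mu$ of $\mu$ is, if it exists, the vague limit (i.e. limit against every finitely supported function on $\mathbb{Z}$, equivalently pointwise convergence of the masses at each $z\in\mathbb{Z}$)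 of the sequence $\frac{1}{2n+1}\,\mu|_n*\widetilde{\mu|_n}$ as $n\to\infty$. For $z\in\mathbb{Z}$, $$\Xi(T,\eta)(z)=\frac12\int f\circ T^{|z|}\cdot f\,d\eta\ \text{ if $T$ is non-invertible},\qquad \Xi(T,\eta)(z)=\int f\circ T^{-z}\cdot f\,d\eta\ \text{ if $T$ is invertible}.$$ *)

theory Defs
  imports "HOL-Probability.Probability"
begin

definition unit_borel :: "real measure" where
  "unit_borel = restrict_space borel {0..1}"

definition invertible_map :: "(real \<Rightarrow> real) \<Rightarrow> bool" where
  "invertible_map T \<longleftrightarrow> bij_betw T {0..1} {0..1} \<and>
     the_inv_into {0..1} T \<in> measurable unit_borel unit_borel"

definition int_iter :: "(real \<Rightarrow> real) \<Rightarrow> int \<Rightarrow> real \<Rightarrow> real" where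
  "int_iter T z = (if z \<ge> 0 then T ^^ nat z else (the_inv_into {0..1} T) ^^ nat (- z))"

definition ergodic_map :: "real measure \<Rightarrow> (real \<Rightarrow> real) \<Rightarrow> bool" where
  "ergodic_map \<eta> T \<longleftrightarrow>
     (\<forall>A \<in> sets \<eta>. T -` A \<inter> space \<eta> = A \<longrightarrow> measure \<eta> A = 0 \<or> measure \<eta> A = 1)"

text \<open>Point masses of the f-weighted return time measure mu_y (a measure on Z,
  given by its mass at each integer).\<close>
definition return_time_weight ::
  "(real \<Rightarrow> real) \<Rightarrow> (real \<Rightarrow> real) \<Rightarrow> real \<Rightarrow> int \<Rightarrow> real" where
  "return_time_weight T f y z =
     (if invertible_map T then f (int_iter T z y)
      else if z \<ge> 0 then f ((T ^^ nat z) y) else 0)"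

definition restr_measure :: "(int \<Rightarrow> real) \<Rightarrow> nat \<Rightarrow> int \<Rightarrow> real" where
  "restr_measure w n x = (if \<bar>x\<bar> \<le> int n then w x else 0)"

definition tilde_measure :: "(int \<Rightarrow> real) \<Rightarrow> int \<Rightarrow> real" where
  "tilde_measure w x = w (- x)"   \<comment> \<open>complex conjugation is the identity on reals\<close>

text \<open>Mass at z of (1/(2n+1)) mu|_n * tilde(mu|_n); mu|_n is supported in B_n.\<close>
definition autocorr_approx :: "(int \<Rightarrow> real) \<Rightarrow> nat \<Rightarrow> int \<Rightarrow> real" where
  "autocorr_approx w n z =
     (1 / (2 * real n + 1)) *
     (\<Sum>x\<in>{- int n..int n}. restr_measure w n x * tilde_measure (restr_measure w n) (z - x))"

text \<open>The autocorrelation of w exists and equals the measure with masses g z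
  (vague convergence on Z = pointwise convergence of masses).\<close>
definition autocorrelation_is :: "(int \<Rightarrow> real) \<Rightarrow> (int \<Rightarrow> real) \<Rightarrow> bool" where
  "autocorrelation_is w g \<longleftrightarrow> (\<forall>z. (\<lambda>n. autocorr_approx w n z) \<longlonglongrightarrow> g z)"

definition Xi :: "(real \<Rightarrow> real) \<Rightarrow> real measure \<Rightarrow> (real \<Rightarrow> real) \<Rightarrow> int \<Rightarrow> real" where
  "Xi T \<eta> f z =
     (if invertible_map T then (\<integral>x. f (int_iter T (- z) x) * f x \<partial>\<eta>)
      else (1/2) * (\<integral>x. f ((T ^^ nat \<bar>z\<bar>) x) * f x \<partial>\<eta>))"

end

theory Submission
  imports Defs
begin

text \<open>For a lag \<open>m \<ge> 0\<close>, the mass of \<open>\<mu>|\<^sub>n * \<mu>|\<^sub>n\<^sup>~\<close> at \<open>m\<close> is a forward Birkhoff sum of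
  \<open>f \<circ> T\<^sup>m \<cdot> f\<close> along the orbit of \<open>y\<close> over about \<open>n\<close> steps, plus, for invertible \<open>T\<close>, the
  corresponding backward sum along \<open>T\<^sup>-\<^sup>1\<close>. Birkhoff's ergodic theorem (proved below for bounded
  functions through the maximal ergodic lemma) makes each of these sums \<open>n \<integral> f \<circ> T\<^sup>m \<cdot> f d\<eta> + o(n)\<close>
  for almost every \<open>y\<close>, simultaneously for the countably many lags. Dividing by \<open>2n + 1\<close> gives half
  the correlation in the one-sided case and all of it in the two-sided case; negative lags follow
  from the symmetry of the autocorrelation and the \<open>T\<close>-invariance of \<eta>.\<close>

section \<open>Birkhoff's ergodic theorem for bounded functions\<close>

lemma frequently_avg_gt_perturb:
  fixes u v :: "nat \<Rightarrow> real"
  assumes close: "\<And>n. \<bar>u n - v n\<bar> \<le> C" and "r' < r"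
    and "\<exists>\<^sub>F n in sequentially. r < u n / n"
  shows "\<exists>\<^sub>F n in sequentially. r' < v n / n"
proof -
  have "\<forall>\<^sub>F n in sequentially. C / real n < r - r'"
    using lim_const_over_n[of C] \<open>r' < r\<close> by (auto simp: order_tendsto_iff)
  with eventually_gt_at_top[of 0] have "\<forall>\<^sub>F n in sequentially. r < u n / n \<longrightarrow> r' < v n / n"
  proof eventually_elim
    case (elim n)
    have "u n / n - v n / n \<le> C / n"
      using close[of n] \<open>0 < n\<close> by (simp add: diff_divide_distrib[symmetric] divide_right_mono)
    with elim show ?case by linarith
  qed
  with assms(3) show ?thesis by (rule frequently_rev_mp)
qed

lemma (in finite_measure) integrable_bounded:
  fixes h :: "'a \<Rightarrow> real"
  assumes "h \<in> borel_measurable M" and "\<And>x. x \<in> space M \<Longrightarrow> \<bar>h x\<bar> \<le> B"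
  shows "integrable M h"
  using assms by (intro integrable_const_bound[where B=B] AE_I2) auto

lemma (in prob_space) integral_nonneg_of_nonneg_on_large_sets:
  fixes h :: "'a \<Rightarrow> real"
  assumes h: "h \<in> borel_measurable M" and bound: "\<And>x. x \<in> space M \<Longrightarrow> \<bar>h x\<bar> \<le> B"
    and G: "\<And>n. G n \<in> sets M" and large: "(\<lambda>n. prob (G n)) \<longlonglongrightarrow> 1"
    and nonneg: "\<And>n. 0 \<le> (\<integral>x. indicator (G n) x * h x \<partial>M)"
  shows "0 \<le> (\<integral>x. h x \<partial>M)"
proof -
  have int_h: "integrable M h"
    using h bound by (rule integrable_bounded)
  have "- B * (1 - prob (G n)) \<le> (\<integral>x. h x \<partial>M)" for n
  proof -
    have int_G: "integrable M (\<lambda>x. indicator (G n) x * h x)"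
      using integrable_mult_indicator[OF G int_h] by simp
    have "- B * (1 - prob (G n)) = (\<integral>x. - B * indicator (space M - G n) x \<partial>M)"
      using G[of n] by (simp add: prob_compl)
    also have "\<dots> \<le> (\<integral>x. h x - indicator (G n) x * h x \<partial>M)"
    proof (rule integral_mono)
      show "integrable M (\<lambda>x. - B * indicator (space M - G n) x)"
        using G[of n] by (intro integrable_mult_right integrable_real_indicator)
          (auto simp: emeasure_eq_measure)
      show "integrable M (\<lambda>x. h x - indicator (G n) x * h x)"
        using int_h int_G by (rule Bochner_Integration.integrable_diff)
      show "- B * indicator (space M - G n) x \<le> h x - indicator (G n) x * h x"
        if "x \<in> space M" for x
        using that bound[OF that] by (auto simp: indicator_def)
    qed
    also have "\<dots> \<le> (\<integral>x. h x \<partial>M)"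
      using nonneg[of n] by (simp add: Bochner_Integration.integral_diff[OF int_h int_G])
    finally show ?thesis .
  qed
  moreover have "(\<lambda>n. - B * (1 - prob (G n))) \<longlonglongrightarrow> 0"
    using tendsto_mult[OF tendsto_const[of "- B"] tendsto_diff[OF tendsto_const[of 1] large]] by simp
  ultimately show ?thesis by (intro LIMSEQ_le_const2) auto
qed

locale ergodic_transformation = prob_space M for M :: "'a measure" +
  fixes T :: "'a \<Rightarrow> 'a"
  assumes measurable_T: "T \<in> measurable M M"
    and emeasure_vimage_T: "\<And>A. A \<in> sets M \<Longrightarrow> emeasure M (T -` A \<inter> space M) = emeasure M A"
    and invariant_set_trivial:
      "\<And>A. A \<in> sets M \<Longrightarrow> T -` A \<inter> space M = A \<Longrightarrow> measure M A = 0 \<or> measure M A = 1"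
begin

lemma T_in_space: "x \<in> space M \<Longrightarrow> T x \<in> space M"
  using measurable_T by (rule measurable_space)

lemma measurable_funpow_T: "T ^^ n \<in> measurable M M"
  using measurable_T by (rule measurable_compose_n)

lemma funpow_T_in_space: "x \<in> space M \<Longrightarrow> (T ^^ n) x \<in> space M"
  using measurable_funpow_T by (rule measurable_space)

lemma integral_comp_T:
  "(g :: 'a \<Rightarrow> real) \<in> borel_measurable M \<Longrightarrow> (\<integral>x. g (T x) \<partial>M) = (\<integral>x. g x \<partial>M)"
proof -
  have "distr M M T = M"
    by (rule measure_eqI) (simp_all add: emeasure_distr measurable_T emeasure_vimage_T)
  then show "g \<in> borel_measurable M \<Longrightarrow> ?thesis"
    using integral_distr[OF measurable_T, of g] by simp
qed

lemma integral_comp_funpow_T: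
  "(g :: 'a \<Rightarrow> real) \<in> borel_measurable M \<Longrightarrow> (\<integral>x. g ((T ^^ n) x) \<partial>M) = (\<integral>x. g x \<partial>M)"
proof (induction n)
  case (Suc n)
  have "(\<lambda>x. g ((T ^^ n) x)) \<in> borel_measurable M"
    using measurable_funpow_T Suc.prems by (rule measurable_compose)
  from integral_comp_T[OF this] show ?case
    using Suc by (simp add: funpow_Suc_right del: funpow.simps)
qed simp

definition birkhoff_sum :: "('a \<Rightarrow> real) \<Rightarrow> nat \<Rightarrow> 'a \<Rightarrow> real" where
  "birkhoff_sum g n x = (\<Sum>k<n. g ((T ^^ k) x))"

lemma birkhoff_sum_0 [simp]: "birkhoff_sum g 0 x = 0"
  by (simp add: birkhoff_sum_def)

lemma birkhoff_sum_Suc: "birkhoff_sum g (Suc n) x = g x + birkhoff_sum g n (T x)"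
  unfolding birkhoff_sum_def sum.lessThan_Suc_shift
  by (simp add: funpow_Suc_right del: funpow.simps)

lemma birkhoff_sum_shift: "birkhoff_sum g n x - birkhoff_sum g n (T x) = g x - g ((T ^^ n) x)"
  using birkhoff_sum_Suc[of g n x] by (simp add: birkhoff_sum_def)

lemma birkhoff_sum_minus_const: "birkhoff_sum (\<lambda>x. g x - q) n x = birkhoff_sum g n x - n * q"
  by (simp add: birkhoff_sum_def sum_subtractf)

lemma birkhoff_sum_uminus: "birkhoff_sum (\<lambda>x. - g x) n x = - birkhoff_sum g n x"
  by (simp add: birkhoff_sum_def sum_negf)

lemma measurable_birkhoff_sum [measurable]:
  "g \<in> borel_measurable M \<Longrightarrow> birkhoff_sum g n \<in> borel_measurable M"
  unfolding birkhoff_sum_def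
  by (intro borel_measurable_sum measurable_compose[OF measurable_funpow_T])

lemma abs_birkhoff_sum_le:
  assumes "\<And>x. x \<in> space M \<Longrightarrow> \<bar>g x\<bar> \<le> B" "x \<in> space M"
  shows "\<bar>birkhoff_sum g n x\<bar> \<le> n * B"
proof -
  have "\<bar>birkhoff_sum g n x\<bar> \<le> (\<Sum>k<n. \<bar>g ((T ^^ k) x)\<bar>)"
    unfolding birkhoff_sum_def by (rule sum_abs)
  also have "\<dots> \<le> (\<Sum>k<n. B)"
    using assms funpow_T_in_space by (intro sum_mono) auto
  finally show ?thesis by simp
qed

definition max_birkhoff_sum :: "('a \<Rightarrow> real) \<Rightarrow> nat \<Rightarrow> 'a \<Rightarrow> real" where
  "max_birkhoff_sum h n x = (MAX k\<in>{..n}. birkhoff_sum h k x)"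

lemma birkhoff_sum_le_max: "k \<le> n \<Longrightarrow> birkhoff_sum h k x \<le> max_birkhoff_sum h n x"
  unfolding max_birkhoff_sum_def by (rule Max_ge) auto

lemma max_birkhoff_sum_attained: "\<exists>k\<le>n. max_birkhoff_sum h n x = birkhoff_sum h k x"
proof -
  have "max_birkhoff_sum h n x \<in> (\<lambda>k. birkhoff_sum h k x) ` {..n}"
    unfolding max_birkhoff_sum_def by (rule Max_in) auto
  then show ?thesis by auto
qed

lemma max_birkhoff_sum_nonneg: "0 \<le> max_birkhoff_sum h n x"
  using birkhoff_sum_le_max[of 0 n h x] by simp

lemma max_birkhoff_sum_mono: "m \<le> n \<Longrightarrow> max_birkhoff_sum h m x \<le> max_birkhoff_sum h n x"
  using max_birkhoff_sum_attained[of m h x] birkhoff_sum_le_max[of _ n h x] by force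

lemma measurable_max_birkhoff_sum [measurable]:
  "h \<in> borel_measurable M \<Longrightarrow> max_birkhoff_sum h n \<in> borel_measurable M"
  unfolding max_birkhoff_sum_def by (intro borel_measurable_Max) auto

lemma abs_max_birkhoff_sum_le:
  assumes "\<And>x. x \<in> space M \<Longrightarrow> \<bar>h x\<bar> \<le> B" "x \<in> space M"
  shows "\<bar>max_birkhoff_sum h n x\<bar> \<le> n * B"
proof -
  obtain k where k: "k \<le> n" "max_birkhoff_sum h n x = birkhoff_sum h k x"
    using max_birkhoff_sum_attained by blast
  have "0 \<le> B" using assms by fastforce
  have "\<bar>birkhoff_sum h k x\<bar> \<le> k * B" using assms by (rule abs_birkhoff_sum_le)
  also have "\<dots> \<le> n * B" using k \<open>0 \<le> B\<close> by (simp add: mult_right_mono)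
  finally show ?thesis using k by simp
qed

theorem maximal_ergodic:
  assumes h: "h \<in> borel_measurable M" and bound: "\<And>x. x \<in> space M \<Longrightarrow> \<bar>h x\<bar> \<le> B"
  shows "0 \<le> (\<integral>x. indicator {x \<in> space M. 0 < max_birkhoff_sum h n x} x * h x \<partial>M)"
proof -
  let ?G = "{x \<in> space M. 0 < max_birkhoff_sum h n x}"
  let ?Mn = "max_birkhoff_sum h n"
  have int_Mn: "integrable M ?Mn"
    using h by (intro integrable_bounded[where B="n * B"] abs_max_birkhoff_sum_le[OF bound]) auto
  have int_MnT: "integrable M (\<lambda>x. ?Mn (T x))"
    using h measurable_T T_in_space
    by (intro integrable_bounded[where B="n * B"] abs_max_birkhoff_sum_le[OF bound]) auto
  have int_G: "integrable M (\<lambda>x. indicator ?G x * h x)"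
    using h bound by (intro integrable_bounded[where B=B]) (force simp: indicator_def)+
  have pointwise: "?Mn x - ?Mn (T x) \<le> indicator ?G x * h x" if "x \<in> space M" for x
  proof (cases "0 < ?Mn x")
    case True
    obtain k where k: "k \<le> n" "?Mn x = birkhoff_sum h k x"
      using max_birkhoff_sum_attained by blast
    with True obtain j where "k = Suc j" by (cases k) auto
    with k have "?Mn x = h x + birkhoff_sum h j (T x)" "birkhoff_sum h j (T x) \<le> ?Mn (T x)"
      by (auto simp: birkhoff_sum_Suc intro: birkhoff_sum_le_max)
    then show ?thesis using True that by simp
  next
    case False
    then show ?thesis using max_birkhoff_sum_nonneg[of h n "T x"] by simp
  qed
  have "0 = (\<integral>x. ?Mn x \<partial>M) - (\<integral>x. ?Mn (T x) \<partial>M)"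
    using integral_comp_T h by simp
  also have "\<dots> = (\<integral>x. ?Mn x - ?Mn (T x) \<partial>M)"
    using int_Mn int_MnT by (rule Bochner_Integration.integral_diff[symmetric])
  also have "\<dots> \<le> (\<integral>x. indicator ?G x * h x \<partial>M)"
    using int_Mn int_MnT int_G pointwise
    by (intro integral_mono Bochner_Integration.integrable_diff)
  finally show ?thesis .
qed

text \<open>The set where \<open>limsup\<^sub>n birkhoff_sum g n x / n > q\<close>, phrased through a rational margin
  so that it is measurable and, for bounded \<open>g\<close>, \<open>T\<close>-invariant.\<close>
definition avg_limsup_gt :: "('a \<Rightarrow> real) \<Rightarrow> real \<Rightarrow> 'a set" where
  "avg_limsup_gt g q = {x \<in> space M. \<exists>r::rat. q < of_rat r \<and>
     (\<exists>\<^sub>F n in sequentially. of_rat r < birkhoff_sum g n x / n)}"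

lemma sets_avg_limsup_gt [measurable]:
  "g \<in> borel_measurable M \<Longrightarrow> avg_limsup_gt g q \<in> sets M"
  unfolding avg_limsup_gt_def frequently_sequentially by measurable

lemma avg_limsup_gt_invariant:
  assumes bound: "\<And>x. x \<in> space M \<Longrightarrow> \<bar>g x\<bar> \<le> B"
  shows "T -` avg_limsup_gt g q \<inter> space M = avg_limsup_gt g q"
proof -
  have margin: "\<exists>r::rat. q < of_rat r \<and> (\<exists>\<^sub>F n in sequentially. of_rat r < v n / n)"
    if close: "\<And>n. \<bar>u n - v n\<bar> \<le> 2 * B"
      and freq: "\<exists>r::rat. q < of_rat r \<and> (\<exists>\<^sub>F n in sequentially. of_rat r < u n / n)"
    for u v :: "nat \<Rightarrow> real"
  proof -
    obtain r :: rat where r: "q < of_rat r" "\<exists>\<^sub>F n in sequentially. of_rat r < u n / n"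
      using freq by blast
    obtain r' where "r' \<in> \<rat>" "q < r'" "r' < of_rat r"
      using Rats_dense_in_real[OF r(1)] by blast
    with frequently_avg_gt_perturb[OF close _ r(2)] show ?thesis
      by (auto elim!: Rats_cases)
  qed
  have close: "\<bar>birkhoff_sum g n x - birkhoff_sum g n (T x)\<bar> \<le> 2 * B" if "x \<in> space M" for n x
    using bound[OF that] bound[OF funpow_T_in_space[OF that, of n]] unfolding birkhoff_sum_shift
    by linarith
  have "T x \<in> avg_limsup_gt g q \<longleftrightarrow> x \<in> avg_limsup_gt g q" if "x \<in> space M" for x
  proof -
    have close_TX: "\<And>n. \<bar>birkhoff_sum g n x - birkhoff_sum g n (T x)\<bar> \<le> 2 * B"
      and close_XT: "\<And>n. \<bar>birkhoff_sum g n (T x) - birkhoff_sum g n x\<bar> \<le> 2 * B"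
      using close[OF that] by (simp_all add: abs_minus_commute)
    show ?thesis
      using margin[of "\<lambda>n. birkhoff_sum g n x" "\<lambda>n. birkhoff_sum g n (T x)", OF close_TX]
        margin[of "\<lambda>n. birkhoff_sum g n (T x)" "\<lambda>n. birkhoff_sum g n x", OF close_XT]
        that T_in_space[OF that]
      unfolding avg_limsup_gt_def by blast
  qed
  then show ?thesis
    unfolding avg_limsup_gt_def by blast
qed

lemma avg_limsup_gt_subset_max_pos:
  "avg_limsup_gt g q \<subseteq> (\<Union>n. {x \<in> space M. 0 < max_birkhoff_sum (\<lambda>x. g x - q) n x})"
proof
  fix x assume "x \<in> avg_limsup_gt g q"
  then obtain r :: rat where x: "x \<in> space M" and "q < of_rat r"
    and "\<exists>\<^sub>F n in sequentially. of_rat r < birkhoff_sum g n x / n"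
    unfolding avg_limsup_gt_def by blast
  then obtain n where n: "1 \<le> n" "of_rat r < birkhoff_sum g n x / n"
    unfolding frequently_sequentially by blast
  have "n * q < n * of_rat r"
    using \<open>q < of_rat r\<close> n(1) by simp
  also have "\<dots> < birkhoff_sum g n x"
    using n by (simp add: field_simps)
  finally have "0 < max_birkhoff_sum (\<lambda>x. g x - q) n x"
    using birkhoff_sum_le_max[of n n "\<lambda>x. g x - q" x] unfolding birkhoff_sum_minus_const by simp
  with x show "x \<in> (\<Union>n. {x \<in> space M. 0 < max_birkhoff_sum (\<lambda>x. g x - q) n x})"
    by blast
qed

text \<open>The set is invariant, hence null or full. If it were full, the sets where some Birkhoff sum
  of \<open>g - q\<close> is positive would exhaust the space, and the maximal ergodic lemma would give
  \<open>\<integral> g \<ge> q\<close>.\<close>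
lemma measure_avg_limsup_gt_eq_0:
  assumes g: "g \<in> borel_measurable M" and bound: "\<And>x. x \<in> space M \<Longrightarrow> \<bar>g x\<bar> \<le> B"
    and q: "(\<integral>x. g x \<partial>M) < q"
  shows "measure M (avg_limsup_gt g q) = 0"
proof (rule ccontr)
  assume "measure M (avg_limsup_gt g q) \<noteq> 0"
  then have full: "measure M (avg_limsup_gt g q) = 1"
    using invariant_set_trivial[OF sets_avg_limsup_gt[OF g] avg_limsup_gt_invariant[OF bound]]
    by blast
  define h where "h = (\<lambda>x. g x - q)"
  define G where "G n = {x \<in> space M. 0 < max_birkhoff_sum h n x}" for n
  have h: "h \<in> borel_measurable M" unfolding h_def using g by measurable
  have h_bound: "\<bar>h x\<bar> \<le> B + \<bar>q\<bar>" if "x \<in> space M" for x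
    using bound[OF that] unfolding h_def by linarith
  have G: "G n \<in> sets M" for n unfolding G_def using h by measurable
  have "avg_limsup_gt g q \<subseteq> (\<Union>n. G n)"
    unfolding G_def h_def by (rule avg_limsup_gt_subset_max_pos)
  then have "measure M (avg_limsup_gt g q) \<le> measure M (\<Union>n. G n)"
    using G by (intro finite_measure_mono) auto
  then have "measure M (\<Union>n. G n) = 1"
    using full prob_le_1 by (intro antisym) auto
  moreover have "incseq G"
    unfolding G_def by (intro monoI) (auto intro: less_le_trans[OF _ max_birkhoff_sum_mono])
  ultimately have "(\<lambda>n. prob (G n)) \<longlonglongrightarrow> 1"
    using finite_Lim_measure_incseq[of G] G by auto
  then have "0 \<le> (\<integral>x. h x \<partial>M)"
    using maximal_ergodic[OF h h_bound]
    by (intro integral_nonneg_of_nonneg_on_large_sets[OF h h_bound G]) (simp_all add: G_def)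
  moreover have "(\<integral>x. h x \<partial>M) = (\<integral>x. g x \<partial>M) - q"
    unfolding h_def using integrable_bounded[OF g bound] by (simp add: prob_space)
  ultimately show False using q by simp
qed

lemma AE_birkhoff_avg_eventually_le:
  assumes g: "g \<in> borel_measurable M" and bound: "\<And>x. x \<in> space M \<Longrightarrow> \<bar>g x\<bar> \<le> B"
  shows "AE x in M. \<forall>r::rat. (\<integral>x. g x \<partial>M) < of_rat r \<longrightarrow>
    (\<forall>\<^sub>F n in sequentially. birkhoff_sum g n x / n \<le> of_rat r)"
  unfolding AE_all_countable
proof
  fix r :: rat
  show "AE x in M. (\<integral>x. g x \<partial>M) < of_rat r \<longrightarrow>
      (\<forall>\<^sub>F n in sequentially. birkhoff_sum g n x / n \<le> of_rat r)"
  proof (cases "(\<integral>x. g x \<partial>M) < of_rat r")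
    case True
    define q where "q = ((\<integral>x. g x \<partial>M) + of_rat r) / 2"
    have q: "(\<integral>x. g x \<partial>M) < q" "q < of_rat r"
      using True unfolding q_def by auto
    have "avg_limsup_gt g q \<in> null_sets M"
      using measure_avg_limsup_gt_eq_0[OF g bound q(1)] g
      by (simp add: null_sets_def emeasure_eq_measure)
    then show ?thesis
      by (rule AE_I') (use q in \<open>auto simp: avg_limsup_gt_def not_eventually not_le\<close>)
  qed simp
qed

theorem birkhoff_ergodic_bounded:
  assumes g: "g \<in> borel_measurable M" and bound: "\<And>x. x \<in> space M \<Longrightarrow> \<bar>g x\<bar> \<le> B"
  shows "AE x in M. (\<lambda>n. (\<Sum>k<n. g ((T ^^ k) x)) / n) \<longlonglongrightarrow> (\<integral>x. g x \<partial>M)"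
proof -
  have neg: "(\<lambda>x. - g x) \<in> borel_measurable M" "\<And>x. x \<in> space M \<Longrightarrow> \<bar>- g x\<bar> \<le> B"
    using g bound by auto
  have upper: "AE x in M. \<forall>r::rat. (\<integral>x. g x \<partial>M) < of_rat r \<longrightarrow>
      (\<forall>\<^sub>F n in sequentially. birkhoff_sum g n x / n \<le> of_rat r)"
    using g bound by (rule AE_birkhoff_avg_eventually_le)
  have lower: "AE x in M. \<forall>r::rat. (\<integral>x. - g x \<partial>M) < of_rat r \<longrightarrow>
      (\<forall>\<^sub>F n in sequentially. birkhoff_sum (\<lambda>x. - g x) n x / n \<le> of_rat r)"
    using neg by (rule AE_birkhoff_avg_eventually_le)
  show ?thesis using upper lower
  proof eventually_elim
    case (elim x)
    let ?L = "\<integral>x. g x \<partial>M"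
    show ?case
      unfolding birkhoff_sum_def[symmetric]
    proof (rule order_tendstoI)
      fix a assume "?L < a"
      then obtain r :: rat where "?L < of_rat r" "of_rat r < a"
        using of_rat_dense by blast
      with elim(1) have "\<forall>\<^sub>F n in sequentially. birkhoff_sum g n x / n \<le> of_rat r"
        by blast
      then show "\<forall>\<^sub>F n in sequentially. birkhoff_sum g n x / n < a"
        by (rule eventually_mono) (use \<open>of_rat r < a\<close> in auto)
    next
      fix a assume "a < ?L"
      then obtain r :: rat where "a < of_rat r" "of_rat r < ?L"
        using of_rat_dense by blast
      then have "(\<integral>x. - g x \<partial>M) < of_rat (- r)"
        by (simp add: of_rat_minus)
      with elim(2) have "\<forall>\<^sub>F n in sequentially. birkhoff_sum (\<lambda>x. - g x) n x / n \<le> of_rat (- r)"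
        by blast
      then show "\<forall>\<^sub>F n in sequentially. a < birkhoff_sum g n x / n"
        by (rule eventually_mono)
          (use \<open>a < of_rat r\<close> in \<open>auto simp: birkhoff_sum_uminus of_rat_minus\<close>)
    qed
  qed
qed

text \<open>Only \<open>S \<circ> T = id\<close> is needed: then \<open>T\<^sup>-\<^sup>1 (S\<^sup>-\<^sup>1 A) = A\<close>, so \<open>S\<close> inherits invariance of the
  measure and ergodicity from \<open>T\<close>.\<close>
lemma ergodic_transformation_left_inverse:
  assumes S: "S \<in> measurable M M" and ST: "\<And>x. x \<in> space M \<Longrightarrow> S (T x) = x"
  shows "ergodic_transformation M S"
proof -
  have vimage: "T -` (S -` A \<inter> space M) \<inter> space M = A" if "A \<in> sets M" for A
    using ST T_in_space sets.sets_into_space[OF that] by auto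
  show ?thesis
  proof (intro ergodic_transformation.intro ergodic_transformation_axioms.intro prob_space_axioms S)
    fix A assume A: "A \<in> sets M"
    have "S -` A \<inter> space M \<in> sets M" using S A by (rule measurable_sets)
    from emeasure_vimage_T[OF this] show "emeasure M (S -` A \<inter> space M) = emeasure M A"
      unfolding vimage[OF A] ..
    assume "S -` A \<inter> space M = A"
    with vimage[OF A] have "T -` A \<inter> space M = A" by simp
    with A show "measure M A = 0 \<or> measure M A = 1" by (rule invariant_set_trivial)
  qed
qed

end

section \<open>Autocorrelation of mass functions on the integers\<close>

lemma sum_int_atLeastLessThan_split:
  "(\<Sum>k\<in>{- int N1..<int N2}. \<phi> k) = (\<Sum>j<N1. \<phi> (- int j - 1)) + (\<Sum>j<N2. \<phi> (int j))"
proof -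
  have "{- int N1..<int N2} = {- int N1..<0} \<union> {0..<int N2}" by auto
  moreover have "(\<Sum>k\<in>{- int N1..<0}. \<phi> k) = (\<Sum>j<N1. \<phi> (- int j - 1))"
    by (rule sum.reindex_bij_witness[of _ "\<lambda>j. - int j - 1" "\<lambda>k. nat (- k - 1)"]) auto
  moreover have "(\<Sum>k\<in>{0..<int N2}. \<phi> k) = (\<Sum>j<N2. \<phi> (int j))"
    using sum.atLeast_int_lessThan_int_shift[of \<phi> 0 N2] by (simp add: lessThan_atLeast0 o_def)
  ultimately show ?thesis
    by (simp add: sum.union_disjoint)
qed

lemma tendsto_cesaro_half:
  fixes A :: "nat \<Rightarrow> real"
  assumes "(\<lambda>N. A N / N) \<longlonglongrightarrow> L"
  shows "(\<lambda>n. A (n + c - d) / (2 * real n + 1)) \<longlonglongrightarrow> L / 2"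
proof -
  have "filterlim (\<lambda>n. n + c - d) sequentially sequentially"
    unfolding filterlim_at_top eventually_sequentially
  proof
    fix N show "\<exists>n\<^sub>0. \<forall>n\<ge>n\<^sub>0. N \<le> n + c - d"
      by (rule exI[of _ "N + d"]) auto
  qed
  with assms have avg: "(\<lambda>n. A (n + c - d) / real (n + c - d)) \<longlonglongrightarrow> L"
    by (rule filterlim_compose[where f="\<lambda>n. n + c - d" and g="\<lambda>N. A N / N", unfolded o_def])
  have "(\<lambda>n. 1/2 + (real c - real d - 1/2) / (2 * real n + 1)) \<longlonglongrightarrow> 1/2 + 0"
    by (intro tendsto_add tendsto_const real_tendsto_divide_at_top
        filterlim_at_top_mono[OF filterlim_real_sequentially]) auto
  moreover have "\<forall>\<^sub>F n in sequentially.
      1/2 + (real c - real d - 1/2) / (2 * real n + 1) = real (n + c - d) / (2 * real n + 1)"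
    using eventually_ge_at_top[of d] by eventually_elim (simp add: of_nat_diff field_simps)
  ultimately have ratio: "(\<lambda>n. real (n + c - d) / (2 * real n + 1)) \<longlonglongrightarrow> 1/2"
    by (simp add: Lim_transform_eventually)
  have "\<forall>\<^sub>F n in sequentially.
      A (n + c - d) / real (n + c - d) * (real (n + c - d) / (2 * real n + 1)) = A (n + c - d) / (2 * real n + 1)"
    using eventually_gt_at_top[of d] by eventually_elim simp
  with tendsto_mult[OF avg ratio] show ?thesis
    by (simp add: Lim_transform_eventually)
qed

lemma autocorr_approx_uminus: "autocorr_approx w n (- z) = autocorr_approx w n z"
proof -
  let ?I = "{- int n..int n}" and ?r = "restr_measure w n"
  have vanish: "?r x = 0" if "x \<notin> ?I" for x
    using that by (auto simp: restr_measure_def)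
  let ?J = "{z - int n..z + int n}"
  have "(\<Sum>x\<in>?I. ?r x * ?r (x + z)) = (\<Sum>y\<in>?J. ?r (y - z) * ?r y)"
    by (rule sum.reindex_bij_witness[of _ "\<lambda>y. y - z" "\<lambda>x. x + z"]) auto
  also have "\<dots> = (\<Sum>y\<in>?I \<union> ?J. ?r (y - z) * ?r y)"
    by (rule sum.mono_neutral_left) (auto simp: vanish)
  also have "\<dots> = (\<Sum>y\<in>?I. ?r (y - z) * ?r y)"
    by (rule sum.mono_neutral_right) (auto simp: vanish)
  finally show ?thesis
    by (simp add: autocorr_approx_def tilde_measure_def mult.commute)
qed

lemma autocorr_approx_split:
  assumes "m \<le> n"
  shows "autocorr_approx w n (int m) = ((\<Sum>j<n + 1 - m. w (int j + int m) * w (int j))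
    + (\<Sum>j<n. w (int m - int j - 1) * w (- int j - 1))) / (2 * real n + 1)"
proof -
  let ?r = "restr_measure w n"
  have "(\<Sum>x\<in>{- int n..int n}. ?r x * ?r (x - int m))
      = (\<Sum>x\<in>{int m - int n..int n}. w x * w (x - int m))"
    using assms by (intro sum.mono_neutral_cong_right) (auto simp: restr_measure_def)
  also have "\<dots> = (\<Sum>k\<in>{- int n..<int (n + 1 - m)}. w (k + int m) * w k)"
    using assms
    by (intro sum.reindex_bij_witness[of _ "\<lambda>k. k + int m" "\<lambda>x. x - int m"]) auto
  finally show ?thesis
    unfolding autocorr_approx_def tilde_measure_def sum_int_atLeastLessThan_split
    by (simp add: algebra_simps add_divide_distrib)
qed

lemma autocorr_approx_tendsto:
  assumes pos: "(\<lambda>N. (\<Sum>j<N. w (int j + int m) * w (int j)) / N) \<longlonglongrightarrow> Lpos"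
    and neg: "(\<lambda>N. (\<Sum>j<N. w (int m - int j - 1) * w (- int j - 1)) / N) \<longlonglongrightarrow> Lneg"
  shows "(\<lambda>n. autocorr_approx w n (int m)) \<longlonglongrightarrow> (Lpos + Lneg) / 2"
proof -
  have "(\<lambda>n. (\<Sum>j<n + 1 - m. w (int j + int m) * w (int j)) / (2 * real n + 1)
      + (\<Sum>j<n + 0 - 0. w (int m - int j - 1) * w (- int j - 1)) / (2 * real n + 1))
    \<longlonglongrightarrow> Lpos / 2 + Lneg / 2"
    by (intro tendsto_add tendsto_cesaro_half pos neg)
  moreover have "\<forall>\<^sub>F n in sequentially. (\<Sum>j<n + 1 - m. w (int j + int m) * w (int j)) / (2 * real n + 1)
      + (\<Sum>j<n + 0 - 0. w (int m - int j - 1) * w (- int j - 1)) / (2 * real n + 1)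
    = autocorr_approx w n (int m)"
    using eventually_ge_at_top[of m]
    by eventually_elim (simp add: autocorr_approx_split add_divide_distrib)
  ultimately show ?thesis
    by (simp add: Lim_transform_eventually add_divide_distrib)
qed

lemma autocorr_approx_tendsto_abs:
  assumes "\<And>m. (\<lambda>n. autocorr_approx w n (int m)) \<longlonglongrightarrow> g m"
  shows "(\<lambda>n. autocorr_approx w n z) \<longlonglongrightarrow> g (nat \<bar>z\<bar>)"
proof (cases "0 \<le> z")
  case True
  then show ?thesis using assms[of "nat z"] by simp
next
  case False
  then show ?thesis using assms[of "nat (- z)"] autocorr_approx_uminus[of w _ z] by simp
qed

section \<open>Autocorrelation of return time measures\<close>

context ergodic_transformation
begin

definition lag_product :: "('a \<Rightarrow> real) \<Rightarrow> nat \<Rightarrow> 'a \<Rightarrow> real" where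
  "lag_product f m x = f ((T ^^ m) x) * f x"

lemma measurable_lag_product [measurable]:
  assumes "f \<in> borel_measurable M"
  shows "lag_product f m \<in> borel_measurable M"
  unfolding lag_product_def using assms measurable_funpow_T by measurable

lemma abs_lag_product_le:
  assumes "\<And>x. x \<in> space M \<Longrightarrow> \<bar>f x\<bar> \<le> B" "x \<in> space M"
  shows "\<bar>lag_product f m x\<bar> \<le> B * B"
  unfolding lag_product_def abs_mult
  using assms(1)[OF assms(2)] assms(1)[OF funpow_T_in_space[OF assms(2)]] by (intro mult_mono) auto

lemma AE_lag_product_averages:
  assumes "f \<in> borel_measurable M" "\<And>x. x \<in> space M \<Longrightarrow> \<bar>f x\<bar> \<le> B"
  shows "AE y in M. \<forall>m. (\<lambda>N. (\<Sum>j<N. lag_product f m ((T ^^ j) y)) / N)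
    \<longlonglongrightarrow> (\<integral>x. lag_product f m x \<partial>M)"
  unfolding AE_all_countable
  using birkhoff_ergodic_bounded[OF measurable_lag_product abs_lag_product_le] assms by blast

lemma lag_product_funpow: "lag_product f m ((T ^^ j) y) = f ((T ^^ (j + m)) y) * f ((T ^^ j) y)"
  unfolding lag_product_def by (metis add.commute comp_apply funpow_add)

lemma AE_autocorrelation_one_sided_orbit:
  assumes f: "f \<in> borel_measurable M" and bound: "\<And>x. x \<in> space M \<Longrightarrow> \<bar>f x\<bar> \<le> B"
  shows "AE y in M. \<forall>z. (\<lambda>n. autocorr_approx (\<lambda>k. if 0 \<le> k then f ((T ^^ nat k) y) else 0) n z)
    \<longlonglongrightarrow> (\<integral>x. f ((T ^^ nat \<bar>z\<bar>) x) * f x \<partial>M) / 2"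
proof -
  have "AE y in M. \<forall>m. (\<lambda>N. (\<Sum>j<N. lag_product f m ((T ^^ j) y)) / N)
      \<longlonglongrightarrow> (\<integral>x. lag_product f m x \<partial>M)"
    using f bound by (rule AE_lag_product_averages)
  then show ?thesis
  proof eventually_elim
    case (elim y)
    define w where "w = (\<lambda>k. if 0 \<le> k then f ((T ^^ nat k) y) else 0)"
    have "(\<lambda>n. autocorr_approx w n (int m)) \<longlonglongrightarrow> ((\<integral>x. lag_product f m x \<partial>M) + 0) / 2" for m
    proof (rule autocorr_approx_tendsto)
      show "(\<lambda>N. (\<Sum>j<N. w (int j + int m) * w (int j)) / N) \<longlonglongrightarrow> (\<integral>x. lag_product f m x \<partial>M)"
        using elim by (simp add: w_def lag_product_funpow nat_add_distrib)
      show "(\<lambda>N. (\<Sum>j<N. w (int m - int j - 1) * w (- int j - 1)) / N) \<longlonglongrightarrow> 0"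
        by (simp add: w_def)
    qed
    then have "(\<lambda>n. autocorr_approx w n z)
        \<longlonglongrightarrow> ((\<integral>x. lag_product f (nat \<bar>z\<bar>) x \<partial>M) + 0) / 2" for z
      by (rule autocorr_approx_tendsto_abs)
    then show ?case
      unfolding w_def lag_product_def by simp
  qed
qed

end

locale invertible_ergodic_transformation = ergodic_transformation M T for M :: "real measure" and T +
  assumes space_eq: "space M = {0..1}"
    and bij_T: "bij_betw T {0..1} {0..1}"
    and measurable_inv_T: "the_inv_into {0..1} T \<in> measurable M M"
begin

abbreviation T_inv :: "real \<Rightarrow> real" where
  "T_inv \<equiv> the_inv_into {0..1} T"

sublocale inverse: ergodic_transformation M T_inv
  using measurable_inv_T
  by (rule ergodic_transformation_left_inverse)
    (use bij_T space_eq in \<open>auto simp: bij_betw_def the_inv_into_f_f\<close>)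

lemma int_iter_diff:
  assumes y: "y \<in> space M"
  shows "int_iter T (int m - int k) y = (T ^^ m) ((T_inv ^^ k) y)"
proof (induction m arbitrary: k)
  case 0
  show ?case by (simp add: int_iter_def)
next
  case (Suc m)
  show ?case
  proof (cases k)
    case 0
    then show ?thesis by (simp add: int_iter_def del: of_nat_Suc)
  next
    case (Suc k')
    have "T (T_inv ((T_inv ^^ k') y)) = (T_inv ^^ k') y"
      using bij_T inverse.funpow_T_in_space[OF y] space_eq by (intro f_the_inv_into_f_bij_betw) auto
    with Suc.IH[of k'] show ?thesis
      unfolding Suc funpow_Suc_right[where f=T] funpow.simps(2)[where f=T_inv] by simp
  qed
qed

lemma integral_int_iter_correlation:
  assumes f: "f \<in> borel_measurable M"
  shows "(\<integral>x. f (int_iter T (- z) x) * f x \<partial>M) = (\<integral>x. lag_product f (nat \<bar>z\<bar>) x \<partial>M)"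
proof (cases "0 \<le> z")
  case True
  have "(\<integral>x. lag_product f (nat z) x \<partial>M) = (\<integral>x. lag_product f (nat z) ((T_inv ^^ nat z) x) \<partial>M)"
    using f by (intro inverse.integral_comp_funpow_T[symmetric]) measurable
  also have "\<dots> = (\<integral>x. f (int_iter T (- z) x) * f x \<partial>M)"
    using True int_iter_diff[of _ "nat z" "nat z"]
    by (intro Bochner_Integration.integral_cong) (auto simp: lag_product_def int_iter_def mult.commute)
  finally show ?thesis using True by simp
qed (simp add: lag_product_def int_iter_def)

theorem AE_autocorrelation_two_sided_orbit:
  assumes f: "f \<in> borel_measurable M" and bound: "\<And>x. x \<in> space M \<Longrightarrow> \<bar>f x\<bar> \<le> B"
  shows "AE y in M. \<forall>z. (\<lambda>n. autocorr_approx (\<lambda>k. f (int_iter T k y)) n z)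
    \<longlonglongrightarrow> (\<integral>x. f (int_iter T (- z) x) * f x \<partial>M)"
proof -
  have forward: "AE y in M. \<forall>m. (\<lambda>N. (\<Sum>j<N. lag_product f m ((T ^^ j) y)) / N)
      \<longlonglongrightarrow> (\<integral>x. lag_product f m x \<partial>M)"
    using f bound by (rule AE_lag_product_averages)
  have backward: "AE y in M. \<forall>m. (\<lambda>N. (\<Sum>j<N. lag_product f m (T_inv ((T_inv ^^ j) y))) / N)
      \<longlonglongrightarrow> (\<integral>x. lag_product f m x \<partial>M)"
    unfolding AE_all_countable
  proof
    fix m
    have "(\<lambda>x. lag_product f m (T_inv x)) \<in> borel_measurable M"
      using f inverse.measurable_T by measurable
    from inverse.birkhoff_ergodic_bounded[OF this abs_lag_product_le[OF bound inverse.T_in_space]]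
    show "AE y in M. (\<lambda>N. (\<Sum>j<N. lag_product f m (T_inv ((T_inv ^^ j) y))) / N)
        \<longlonglongrightarrow> (\<integral>x. lag_product f m x \<partial>M)"
      using inverse.integral_comp_T[OF measurable_lag_product[OF f]] by simp
  qed
  show ?thesis using forward backward AE_space
  proof eventually_elim
    case (elim y)
    define w where "w = (\<lambda>k. f (int_iter T k y))"
    have past: "w (int m - int j - 1) * w (- int j - 1) = lag_product f m (T_inv ((T_inv ^^ j) y))"
      for m j
    proof -
      have "int m - int j - 1 = int m - int (Suc j)" "- int j - 1 = int 0 - int (Suc j)"
        by simp_all
      then show ?thesis
        unfolding w_def lag_product_def by (simp only: int_iter_diff[OF elim(3)]) simp
    qed
    have "(\<lambda>n. autocorr_approx w n (int m))
        \<longlonglongrightarrow> ((\<integral>x. lag_product f m x \<partial>M) + (\<integral>x. lag_product f m x \<partial>M)) / 2" for m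
    proof (rule autocorr_approx_tendsto)
      show "(\<lambda>N. (\<Sum>j<N. w (int j + int m) * w (int j)) / N) \<longlonglongrightarrow> (\<integral>x. lag_product f m x \<partial>M)"
        using elim(1) by (simp add: w_def lag_product_funpow int_iter_def nat_add_distrib)
      show "(\<lambda>N. (\<Sum>j<N. w (int m - int j - 1) * w (- int j - 1)) / N)
          \<longlonglongrightarrow> (\<integral>x. lag_product f m x \<partial>M)"
        using elim(2) by (simp add: past)
    qed
    then have "(\<lambda>n. autocorr_approx w n (int m)) \<longlonglongrightarrow> (\<integral>x. lag_product f m x \<partial>M)" for m
      by simp
    then have "(\<lambda>n. autocorr_approx w n z) \<longlonglongrightarrow> (\<integral>x. lag_product f (nat \<bar>z\<bar>) x \<partial>M)" for z
      by (rule autocorr_approx_tendsto_abs)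
    then show ?case
      unfolding w_def integral_int_iter_correlation[OF f] by simp
  qed
qed

end

lemma space_eq_unit_interval:
  "sets \<eta> = sets unit_borel \<Longrightarrow> space \<eta> = {0..1}"
  by (drule sets_eq_imp_space_eq) (simp add: unit_borel_def space_restrict_space)

lemma ergodic_transformation_of_ergodic_map:
  assumes "prob_space \<eta>" and sets: "sets \<eta> = sets unit_borel"
    and "T \<in> measurable unit_borel unit_borel"
    and "\<forall>A \<in> sets \<eta>. emeasure \<eta> (T -` A \<inter> space \<eta>) = emeasure \<eta> A"
    and "ergodic_map \<eta> T"
  shows "ergodic_transformation \<eta> T"
  using assms measurable_cong_sets[OF sets sets]
  by (intro ergodic_transformation.intro ergodic_transformation_axioms.intro)
    (auto simp: ergodic_map_def)

lemma invertible_ergodic_transformation_of_invertible_map: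
  assumes "ergodic_transformation \<eta> T" and sets: "sets \<eta> = sets unit_borel"
    and "invertible_map T"
  shows "invertible_ergodic_transformation \<eta> T"
  using assms space_eq_unit_interval[OF sets] measurable_cong_sets[OF sets sets]
  by (intro invertible_ergodic_transformation.intro invertible_ergodic_transformation_axioms.intro)
    (auto simp: invertible_map_def)

theorem theorem3p1:
  fixes T :: "real \<Rightarrow> real" and \<eta> :: "real measure" and f :: "real \<Rightarrow> real"
  assumes "prob_space \<eta>"
    and "sets \<eta> = sets unit_borel"
    and "T \<in> measurable unit_borel unit_borel"
    and "\<forall>A \<in> sets \<eta>. emeasure \<eta> (T -` A \<inter> space \<eta>) = emeasure \<eta> A"
    and "ergodic_map \<eta> T"
    and "integrable \<eta> f"
    and "\<forall>x \<in> {0..1}. f x \<ge> 0"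
    and "\<exists>B. \<forall>x \<in> {0..1}. \<bar>f x\<bar> \<le> B"
  shows "AE y in \<eta>. autocorrelation_is (return_time_weight T f y) (Xi T \<eta> f)"
proof -
  interpret ergodic_transformation \<eta> T
    using assms(1-5) by (rule ergodic_transformation_of_ergodic_map)
  have f: "f \<in> borel_measurable \<eta>"
    using assms(6) by (rule borel_measurable_integrable)
  obtain B where "\<forall>x \<in> {0..1}. \<bar>f x\<bar> \<le> B"
    using assms(8) by blast
  then have bound: "\<And>x. x \<in> space \<eta> \<Longrightarrow> \<bar>f x\<bar> \<le> B"
    using space_eq_unit_interval[OF assms(2)] by blast
  show ?thesis
  proof (cases "invertible_map T")
    case True
    interpret invertible_ergodic_transformation \<eta> T
      using ergodic_transformation_axioms assms(2) True
      by (rule invertible_ergodic_transformation_of_invertible_map)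
    have "return_time_weight T f y = (\<lambda>k. f (int_iter T k y))" for y
      using True by (simp add: return_time_weight_def fun_eq_iff)
    with AE_autocorrelation_two_sided_orbit[OF f bound] True show ?thesis
      by (simp add: autocorrelation_is_def Xi_def)
  next
    case False
    then have "return_time_weight T f y = (\<lambda>k. if 0 \<le> k then f ((T ^^ nat k) y) else 0)" for y
      by (simp add: return_time_weight_def fun_eq_iff)
    with AE_autocorrelation_one_sided_orbit[OF f bound] False show ?thesis
      by (simp add: autocorrelation_is_def Xi_def)
  qed
qed

end
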